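(* For the dynamical network $N=F\circ T$, let $L=\max_{i\in\mathcal{I}}L_i$. If $L\rho(\Lambda)<1$, then $N$ has a globally attracting fixed point; that is, the interaction $F$ stabilizes the local systems $(T,X)$ if $L\ge 1$, and maintains their stability if $L<1$.
   Context: Let $\mathcal{I}=\{1,\dots,n\}$. For each $i\in\mathcal{I}$ let $(X_i,d)$ be a compact metric space and $T_i:X_i\to X_i$ with $L_i=\sup_{x_i\ne y_i}\frac{d(T_i(x_i),T_i(y_i))}{d(x_i,y_i)}<\infty$. $X=\prod_iX_i$ with $d_{\max}(x,y)=\max_id(x_i,y_i)$, and $T$ the product map $T(x)_i=T_i(x_i)$. A map $F:X\to X$ is an interaction if for every $j$ there are a nonempty $\mathcal{I}_j\subseteq\mathcal{I}$, a continuous $F_j:\prod_{i\in\mathcal{I}_j}X_i\to X_j$ with $F(x)_j=F_j(\{x_i\}_{i\in\mathcal{I}_j})$, and constants $\Lambda_{ij}\ge0$ with $d(F_j(\{x_i\}),F_j(\{y_i\}))\le\sum_{i\in\mathcal{I}_j}\Lambda_{ij}d(x_i,y_i)$; $\Lambda_{ij}=0$ for $i\notin\mathcal{I}_j$; $\Lambda=(\Lambda_{ij})$. The dynamical network is $N=F\circ T$. A globally attracting fixed point is a point $\tilde x\in X$ with $N^k(y)\to\tilde x$ for all $y\in X$. $F$ stabilizes $(T,X)$ if $\max_iL_i\ge1$ and $N$ has a globally attracting fixed point; $F$ maintains the stability of $(T,X)$ if $\max_iL_i<1$ and $N$ has a globally attracting fixed point. $\rho$ denotes spectral radius. *)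

theory Defs
  imports Complex_Main "Jordan_Normal_Form.Spectral_Radius"
begin

text \<open>Index set I = {0..<n} (the paper's {1..n}, shifted). Each local space X i is a subset
  of a common metric space type 'a; a point of the product X is a function in
  PiE {..<n} X (value undefined outside the index set).\<close>

definition prod_space :: "nat \<Rightarrow> (nat \<Rightarrow> 'a set) \<Rightarrow> (nat \<Rightarrow> 'a) set" where
  "prod_space n X = PiE {..<n} X"

definition dmax :: "nat \<Rightarrow> (nat \<Rightarrow> 'a::metric_space) \<Rightarrow> (nat \<Rightarrow> 'a) \<Rightarrow> real" where
  "dmax n x y = Max (insert 0 ((\<lambda>i. dist (x i) (y i)) ` {..<n}))"

text \<open>Lipschitz constant L_i = sup of the difference quotients (0 if there are no two
  distinct points).\<close>
definition lip_const :: "'a::metric_space set \<Rightarrow> ('a \<Rightarrow> 'a) \<Rightarrow> real" where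
  "lip_const S f = Sup (insert 0 {dist (f x) (f y) / dist x y | x y. x \<in> S \<and> y \<in> S \<and> x \<noteq> y})"

definition lip_finite :: "'a::metric_space set \<Rightarrow> ('a \<Rightarrow> 'a) \<Rightarrow> bool" where
  "lip_finite S f = bdd_above {dist (f x) (f y) / dist x y | x y. x \<in> S \<and> y \<in> S \<and> x \<noteq> y}"

definition product_map :: "nat \<Rightarrow> (nat \<Rightarrow> 'a \<Rightarrow> 'a) \<Rightarrow> (nat \<Rightarrow> 'a) \<Rightarrow> (nat \<Rightarrow> 'a)" where
  "product_map n T x = (\<lambda>i. if i < n then T i (x i) else undefined)"

text \<open>F given componentwise: F j x is the j-th component of F(x).\<close>
definition interaction_map :: "nat \<Rightarrow> (nat \<Rightarrow> (nat \<Rightarrow> 'a) \<Rightarrow> 'a) \<Rightarrow> (nat \<Rightarrow> 'a) \<Rightarrow> (nat \<Rightarrow> 'a)" where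
  "interaction_map n F x = (\<lambda>j. if j < n then F j x else undefined)"

definition is_interaction ::
  "nat \<Rightarrow> (nat \<Rightarrow> 'a::metric_space set) \<Rightarrow> (nat \<Rightarrow> (nat \<Rightarrow> 'a) \<Rightarrow> 'a)
   \<Rightarrow> (nat \<Rightarrow> nat set) \<Rightarrow> (nat \<Rightarrow> nat \<Rightarrow> real) \<Rightarrow> bool" where
  "is_interaction n X F Ij Lam \<longleftrightarrow>
     (\<forall>j<n.
        Ij j \<noteq> {} \<and> Ij j \<subseteq> {..<n} \<and>
        (\<forall>x\<in>prod_space n X. F j x \<in> X j) \<and>
        (\<forall>x\<in>prod_space n X. \<forall>y\<in>prod_space n X. (\<forall>i\<in>Ij j. x i = y i) \<longrightarrow> F j x = F j y) \<and>
        (\<forall>x\<in>prod_space n X. \<forall>e>0. \<exists>d>0. \<forall>y\<in>prod_space n X.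
            dmax n x y < d \<longrightarrow> dist (F j x) (F j y) < e) \<and>
        (\<forall>x\<in>prod_space n X. \<forall>y\<in>prod_space n X.
            dist (F j x) (F j y) \<le> (\<Sum>i\<in>Ij j. Lam i j * dist (x i) (y i))) \<and>
        (\<forall>i<n. Lam i j \<ge> 0 \<and> (i \<notin> Ij j \<longrightarrow> Lam i j = 0)))"

definition Lam_mat :: "nat \<Rightarrow> (nat \<Rightarrow> nat \<Rightarrow> real) \<Rightarrow> complex mat" where
  "Lam_mat n Lam = Matrix.mat n n (\<lambda>(i, j). complex_of_real (Lam i j))"

definition globally_attracting_fixed_point ::
  "nat \<Rightarrow> (nat \<Rightarrow> 'a::metric_space set) \<Rightarrow> ((nat \<Rightarrow> 'a) \<Rightarrow> (nat \<Rightarrow> 'a)) \<Rightarrow> (nat \<Rightarrow> 'a) \<Rightarrow> bool" where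
  "globally_attracting_fixed_point n X N xt \<longleftrightarrow>
     xt \<in> prod_space n X \<and>
     (\<forall>y\<in>prod_space n X. (\<lambda>k. dmax n ((N ^^ k) y) xt) \<longlonglongrightarrow> 0)"

definition has_gafp :: "nat \<Rightarrow> (nat \<Rightarrow> 'a::metric_space set) \<Rightarrow> ((nat \<Rightarrow> 'a) \<Rightarrow> (nat \<Rightarrow> 'a)) \<Rightarrow> bool" where
  "has_gafp n X N \<longleftrightarrow> (\<exists>xt. globally_attracting_fixed_point n X N xt)"

definition max_lip :: "nat \<Rightarrow> (nat \<Rightarrow> 'a::metric_space set) \<Rightarrow> (nat \<Rightarrow> 'a \<Rightarrow> 'a) \<Rightarrow> real" where
  "max_lip n X T = Max ((\<lambda>i. lip_const (X i) (T i)) ` {..<n})"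

definition stabilizes where
  "stabilizes n X T F \<longleftrightarrow> max_lip n X T \<ge> 1 \<and> has_gafp n X (interaction_map n F \<circ> product_map n T)"

definition maintains_stability where
  "maintains_stability n X T F \<longleftrightarrow> max_lip n X T < 1 \<and> has_gafp n X (interaction_map n F \<circ> product_map n T)"

end

theory Submission
  imports Defs "HOL-Analysis.Elementary_Metric_Spaces"
begin

text \<open>Write \<open>L = max_lip n X T\<close> and \<open>d\<^sub>i(x, y) = dist (x i) (y i)\<close>. One step of the network
  satisfies \<open>d\<^sub>j(N x, N y) \<le> \<Sum>\<^sub>i L \<Lambda>\<^sub>i\<^sub>j d\<^sub>i(x, y)\<close>, so by induction
  \<open>d\<^sub>j(N\<^sup>k x, N\<^sup>k y) \<le> \<Sum>\<^sub>i ((L \<Lambda>)\<^sup>k)\<^sub>i\<^sub>j d\<^sub>i(x, y)\<close>. Since \<open>\<rho>(L \<Lambda>) = L \<rho>(\<Lambda>) < 1\<close>, the entries of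
  \<open>(L \<Lambda>)\<^sup>k\<close> decay like \<open>C r\<^sup>k\<close> with \<open>r < 1\<close>, i.e. \<open>N\<close> is eventually contracting for \<open>dmax\<close>.
  The product of the compact, hence complete, spaces \<open>X i\<close> is complete, so every orbit
  converges to the same fixed point.\<close>

lemma smult_mat_mult_mat_vec:
  fixes A :: "'a::comm_ring_1 mat"
  assumes "A \<in> carrier_mat nr nc" "v \<in> carrier_vec nc"
  shows "(c \<cdot>\<^sub>m A) *\<^sub>v v = c \<cdot>\<^sub>v (A *\<^sub>v v)"
  by (rule eq_vecI) (use assms in \<open>auto simp: scalar_prod_def sum_distrib_left mult.assoc\<close>)

lemma spectral_radius_nonneg:
  assumes "A \<in> carrier_mat n n" "n > 0"
  shows "0 \<le> spectral_radius A"
  using spectral_radius_mem_max(1)[OF assms] by auto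

lemma spectral_radius_smult_le:
  assumes A: "A \<in> carrier_mat n n" and n: "n > 0"
  shows "spectral_radius (c \<cdot>\<^sub>m A) \<le> norm c * spectral_radius A"
proof -
  have cA: "c \<cdot>\<^sub>m A \<in> carrier_mat n n" using A by simp
  obtain \<mu> where \<mu>: "\<mu> \<in> spectrum (c \<cdot>\<^sub>m A)" and eq: "spectral_radius (c \<cdot>\<^sub>m A) = norm \<mu>"
    using spectral_radius_mem_max(1)[OF cA n] by auto
  from \<mu> obtain v where v: "v \<in> carrier_vec n" "v \<noteq> 0\<^sub>v n" "c \<cdot>\<^sub>v (A *\<^sub>v v) = \<mu> \<cdot>\<^sub>v v"
    using A by (auto simp: spectrum_def eigenvalue_def eigenvector_def smult_mat_mult_mat_vec[OF A])
  then obtain i where i: "i < n" "v $ i \<noteq> 0" by (metis carrier_vecD eq_vecI index_zero_vec)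
  have comp: "c * (A *\<^sub>v v) $ k = \<mu> * v $ k" if "k < n" for k
    using arg_cong[OF v(3), of "\<lambda>w. w $ k"] that A v(1) by simp
  show ?thesis
  proof (cases "c = 0")
    case True
    then have "\<mu> = 0" using comp[OF i(1)] i(2) by simp
    then show ?thesis using eq True spectral_radius_nonneg[OF A n] by simp
  next
    case False
    have "A *\<^sub>v v = (\<mu> / c) \<cdot>\<^sub>v v"
      by (rule eq_vecI) (use comp False A v(1) in \<open>auto simp: field_simps\<close>)
    then have "eigenvector A v (\<mu> / c)"
      using v A by (simp add: eigenvector_def)
    then have "norm (\<mu> / c) \<in> norm ` spectrum A"
      unfolding spectrum_def eigenvalue_def by blast
    from spectral_radius_mem_max(2)[OF A n this] False
    show ?thesis using eq by (simp add: norm_divide field_simps)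
  qed
qed

fun fun_mat_pow :: "nat \<Rightarrow> (nat \<Rightarrow> nat \<Rightarrow> real) \<Rightarrow> nat \<Rightarrow> nat \<Rightarrow> nat \<Rightarrow> real" where
  "fun_mat_pow n A 0 i j = (if i = j then 1 else 0)"
| "fun_mat_pow n A (Suc k) i j = (\<Sum>l<n. fun_mat_pow n A k i l * A l j)"

lemma Lam_mat_carrier [simp]: "Lam_mat n A \<in> carrier_mat n n"
  by (simp add: Lam_mat_def)

lemma Lam_mat_pow: "Lam_mat n A ^\<^sub>m k = Lam_mat n (fun_mat_pow n A k)"
proof (induction k)
  case 0
  show ?case by (rule eq_matI) (auto simp: Lam_mat_def)
next
  case (Suc k)
  show ?case
    unfolding pow_mat.simps Suc.IH
    by (rule eq_matI) (auto simp: Lam_mat_def scalar_prod_def lessThan_atLeast0)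
qed

lemma Lam_mat_scale: "Lam_mat n (\<lambda>i j. s * A i j) = complex_of_real s \<cdot>\<^sub>m Lam_mat n A"
  by (rule eq_matI) (auto simp: Lam_mat_def)

lemma spectral_radius_Lam_mat_scale_le:
  assumes "n > 0" "0 \<le> s"
  shows "spectral_radius (Lam_mat n (\<lambda>i j. s * A i j)) \<le> s * spectral_radius (Lam_mat n A)"
  unfolding Lam_mat_scale
  by (rule order_trans[OF spectral_radius_smult_le[OF Lam_mat_carrier \<open>n > 0\<close>]]) (use assms in simp)

lemma fun_mat_pow_scale:
  "fun_mat_pow n (\<lambda>i j. s * A i j) k i j = s ^ k * fun_mat_pow n A k i j"
  by (induction k arbitrary: j) (auto simp: sum_distrib_left mult_ac)

lemma fun_mat_pow_geometric_bound:
  assumes n: "n > 0" and rho: "spectral_radius (Lam_mat n A) < 1"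
  obtains C r where "0 \<le> C" "0 \<le> r" "r < 1"
    "\<And>k i j. i < n \<Longrightarrow> j < n \<Longrightarrow> \<bar>fun_mat_pow n A k i j\<bar> \<le> C * r ^ k"
proof -
  define \<rho> where "\<rho> = spectral_radius (Lam_mat n A)"
  have "0 \<le> \<rho>"
    unfolding \<rho>_def by (rule spectral_radius_nonneg[OF Lam_mat_carrier n])
  \<comment> \<open>The powers of \<open>s A\<close> stay bounded for any \<open>s > 1\<close> with \<open>s \<rho> < 1\<close>, so those of \<open>A\<close> decay like \<open>s\<^sup>-\<^sup>k\<close>.\<close>
  define s where "s = 2 / (1 + \<rho>)"
  have s: "1 < s" "s * \<rho> < 1" using \<open>0 \<le> \<rho>\<close> rho by (auto simp: s_def \<rho>_def field_simps)
  have "spectral_radius (Lam_mat n (\<lambda>i j. s * A i j)) \<le> s * \<rho>"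
    unfolding \<rho>_def using s by (intro spectral_radius_Lam_mat_scale_le[OF n]) simp
  then obtain C where C: "\<And>k. norm_bound (Lam_mat n (\<lambda>i j. s * A i j) ^\<^sub>m k) C"
    using spectral_radius_jnf_norm_bound_less_1_upper_triangular[OF Lam_mat_carrier] s by force
  have bound: "\<bar>fun_mat_pow n A k i j\<bar> \<le> C * (1 / s) ^ k" if "i < n" "j < n" for k i j
  proof -
    have "s ^ k * \<bar>fun_mat_pow n A k i j\<bar> \<le> C"
      using C[of k] that s unfolding norm_bound_def Lam_mat_pow
      by (auto simp: Lam_mat_def fun_mat_pow_scale norm_mult norm_power)
    then show ?thesis using s by (simp add: field_simps)
  qed
  show ?thesis
  proof (rule that[of C "1 / s"])
    show "0 \<le> C" using bound[OF n n, of 0] by simp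
  qed (use s bound in auto)
qed

lemma dist_le_dmax: "i < n \<Longrightarrow> dist (x i) (y i) \<le> dmax n x y"
  unfolding dmax_def by (intro Max_ge) auto

lemma dmax_leI: "0 \<le> B \<Longrightarrow> (\<And>i. i < n \<Longrightarrow> dist (x i) (y i) \<le> B) \<Longrightarrow> dmax n x y \<le> B"
  unfolding dmax_def by (subst Max_le_iff) auto

lemma dmax_nonneg: "0 \<le> dmax n x y"
  unfolding dmax_def by (intro Max_ge) auto

lemma tendsto_dmax_zero_iff:
  "(\<lambda>k. dmax n (f k) g) \<longlonglongrightarrow> 0 \<longleftrightarrow> (\<forall>i<n. (\<lambda>k. f k i) \<longlonglongrightarrow> g i)"
proof
  assume lim: "(\<lambda>k. dmax n (f k) g) \<longlonglongrightarrow> 0"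
  show "\<forall>i<n. (\<lambda>k. f k i) \<longlonglongrightarrow> g i"
  proof (intro allI impI)
    fix i assume "i < n"
    then have "(\<lambda>k. dist (f k i) (g i)) \<longlonglongrightarrow> 0"
      by (intro tendsto_sandwich[OF _ _ tendsto_const lim]) (simp_all add: dist_le_dmax)
    then show "(\<lambda>k. f k i) \<longlonglongrightarrow> g i" by (simp flip: tendsto_dist_iff)
  qed
next
  assume "\<forall>i<n. (\<lambda>k. f k i) \<longlonglongrightarrow> g i"
  then have sum_lim: "(\<lambda>k. \<Sum>i<n. dist (f k i) (g i)) \<longlonglongrightarrow> 0"
    by (intro tendsto_null_sum) (simp flip: tendsto_dist_iff)
  have "dmax n (f k) g \<le> (\<Sum>i<n. dist (f k i) (g i))" for k
    by (rule dmax_leI) (auto intro: sum_nonneg member_le_sum)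
  then show "(\<lambda>k. dmax n (f k) g) \<longlonglongrightarrow> 0"
    by (intro tendsto_sandwich[OF _ _ tendsto_const sum_lim] always_eventually allI dmax_nonneg)
qed

lemma Cauchy_if_dist_Suc_le_geometric:
  fixes z :: "nat \<Rightarrow> 'a::metric_space"
  assumes r: "0 \<le> r" "r < 1" and step: "\<And>k. dist (z k) (z (Suc k)) \<le> B * r ^ k"
  shows "Cauchy z"
proof -
  have "0 \<le> B" using order_trans[OF zero_le_dist step[of 0]] by simp
  have tail: "dist (z m) (z (m + p)) \<le> B * r ^ m / (1 - r)" for m p
  proof -
    have "dist (z m) (z (m + p)) \<le> (\<Sum>q<p. B * r ^ (m + q))"
    proof (induction p)
      case (Suc p)
      have "dist (z m) (z (m + Suc p)) \<le> dist (z m) (z (m + p)) + dist (z (m + p)) (z (Suc (m + p)))"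
        by (simp add: dist_triangle)
      also have "\<dots> \<le> (\<Sum>q<Suc p. B * r ^ (m + q))"
        using Suc.IH step[of "m + p"] by simp
      finally show ?case .
    qed simp
    also have "\<dots> = B * r ^ m * (\<Sum>q<p. r ^ q)"
      by (simp add: sum_distrib_left power_add mult_ac)
    also have "\<dots> = B * r ^ m * (1 - r ^ p) / (1 - r)"
      using r by (simp add: sum_gp_strict)
    also have "\<dots> \<le> B * r ^ m / (1 - r)"
      using r \<open>0 \<le> B\<close> by (intro divide_right_mono mult_left_le) auto
    finally show ?thesis .
  qed
  have bound_lim: "(\<lambda>m. B * r ^ m / (1 - r)) \<longlonglongrightarrow> 0"
    using LIMSEQ_power_zero[of r] r by (intro tendsto_eq_intros) auto
  show ?thesis
  proof (rule Cauchy_altdef[THEN iffD2], intro allI impI)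
    fix e :: real assume "0 < e"
    then obtain M where M: "\<And>m. m \<ge> M \<Longrightarrow> B * r ^ m / (1 - r) < e"
      using order_tendstoD(2)[OF bound_lim \<open>0 < e\<close>] unfolding eventually_sequentially by blast
    have "dist (z m) (z m') < e" if "m \<ge> M" "m' > m" for m m'
      using tail[of m "m' - m"] M[OF that(1)] that(2) by simp
    then show "\<exists>M. \<forall>m\<ge>M. \<forall>n>m. dist (z m) (z n) < e" by blast
  qed
qed

lemma funpow_closed: "(\<And>x. x \<in> S \<Longrightarrow> f x \<in> S) \<Longrightarrow> x \<in> S \<Longrightarrow> (f ^^ k) x \<in> S"
  by (induction k) auto

lemma dist_funpow_le_fun_mat_pow:
  assumes maps: "\<And>x. x \<in> S \<Longrightarrow> N x \<in> S"
    and step: "\<And>x y j. x \<in> S \<Longrightarrow> y \<in> S \<Longrightarrow> j < n \<Longrightarrow>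
      dist (N x j) (N y j) \<le> (\<Sum>i<n. A i j * dist (x i) (y i))"
    and nonneg: "\<And>i j. i < n \<Longrightarrow> j < n \<Longrightarrow> 0 \<le> A i j"
    and x: "x \<in> S" and y: "y \<in> S" and j: "j < n"
  shows "dist ((N ^^ k) x j) ((N ^^ k) y j) \<le> (\<Sum>i<n. fun_mat_pow n A k i j * dist (x i) (y i))"
  using j
proof (induction k arbitrary: j)
  case 0
  then show ?case by (simp add: if_distrib[of "\<lambda>a. a * _"] cong: if_cong)
next
  case (Suc k)
  have "dist ((N ^^ Suc k) x j) ((N ^^ Suc k) y j)
      \<le> (\<Sum>l<n. A l j * dist ((N ^^ k) x l) ((N ^^ k) y l))"
    using step[OF funpow_closed[OF maps x] funpow_closed[OF maps y] Suc.prems] by simp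
  also have "\<dots> \<le> (\<Sum>l<n. A l j * (\<Sum>i<n. fun_mat_pow n A k i l * dist (x i) (y i)))"
    using Suc.IH nonneg Suc.prems by (intro sum_mono mult_left_mono) auto
  also have "\<dots> = (\<Sum>i<n. \<Sum>l<n. A l j * (fun_mat_pow n A k i l * dist (x i) (y i)))"
    unfolding sum_distrib_left by (rule sum.swap)
  also have "\<dots> = (\<Sum>i<n. fun_mat_pow n A (Suc k) i j * dist (x i) (y i))"
    by (simp add: sum_distrib_left sum_distrib_right mult_ac)
  finally show ?case .
qed

lemma dmax_funpow_le_geometric:
  assumes n: "n > 0"
    and maps: "\<And>x. x \<in> S \<Longrightarrow> N x \<in> S"
    and step: "\<And>x y j. x \<in> S \<Longrightarrow> y \<in> S \<Longrightarrow> j < n \<Longrightarrow>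
      dist (N x j) (N y j) \<le> (\<Sum>i<n. A i j * dist (x i) (y i))"
    and nonneg: "\<And>i j. i < n \<Longrightarrow> j < n \<Longrightarrow> 0 \<le> A i j"
    and rho: "spectral_radius (Lam_mat n A) < 1"
  obtains K r where "0 \<le> r" "r < 1"
    "\<And>x y k. x \<in> S \<Longrightarrow> y \<in> S \<Longrightarrow> dmax n ((N ^^ k) x) ((N ^^ k) y) \<le> K * r ^ k * dmax n x y"
proof -
  obtain C r where C: "0 \<le> C" and r: "0 \<le> r" "r < 1"
    and bound: "\<And>k i j. i < n \<Longrightarrow> j < n \<Longrightarrow> \<bar>fun_mat_pow n A k i j\<bar> \<le> C * r ^ k"
    using fun_mat_pow_geometric_bound[OF n rho] by blast
  have "dmax n ((N ^^ k) x) ((N ^^ k) y) \<le> (n * C) * r ^ k * dmax n x y"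
    if x: "x \<in> S" and y: "y \<in> S" for x y k
  proof (rule dmax_leI)
    show "0 \<le> (n * C) * r ^ k * dmax n x y"
      by (intro mult_nonneg_nonneg) (use C r dmax_nonneg in auto)
    fix j assume j: "j < n"
    have "dist ((N ^^ k) x j) ((N ^^ k) y j) \<le> (\<Sum>i<n. fun_mat_pow n A k i j * dist (x i) (y i))"
      by (rule dist_funpow_le_fun_mat_pow[OF maps step nonneg x y j])
    also have "\<dots> \<le> (\<Sum>i<n. C * r ^ k * dmax n x y)"
    proof (rule sum_mono)
      fix i assume "i \<in> {..<n}"
      then have "\<bar>fun_mat_pow n A k i j\<bar> * dist (x i) (y i) \<le> C * r ^ k * dmax n x y"
        using bound[of i j k] j C r by (intro mult_mono dist_le_dmax) auto
      then show "fun_mat_pow n A k i j * dist (x i) (y i) \<le> C * r ^ k * dmax n x y"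
        by (rule order_trans[OF mult_right_mono[OF abs_ge_self zero_le_dist]])
    qed
    also have "\<dots> = (n * C) * r ^ k * dmax n x y" by simp
    finally show "dist ((N ^^ k) x j) ((N ^^ k) y j) \<le> (n * C) * r ^ k * dmax n x y" .
  qed
  with r show ?thesis by (rule that)
qed

lemma funpow_dmax_convergent:
  assumes X_complete: "\<And>i. i < n \<Longrightarrow> complete (X i)"
    and maps: "\<And>x. x \<in> prod_space n X \<Longrightarrow> N x \<in> prod_space n X"
    and r: "0 \<le> r" "r < 1"
    and contr: "\<And>x y k. x \<in> prod_space n X \<Longrightarrow> y \<in> prod_space n X \<Longrightarrow>
      dmax n ((N ^^ k) x) ((N ^^ k) y) \<le> K * r ^ k * dmax n x y"
    and x0: "x0 \<in> prod_space n X"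
  obtains xt where "xt \<in> prod_space n X" "(\<lambda>k. dmax n ((N ^^ k) x0) xt) \<longlonglongrightarrow> 0"
proof -
  define z where "z k = (N ^^ k) x0" for k
  have "\<exists>l\<in>X i. (\<lambda>k. z k i) \<longlonglongrightarrow> l" if i: "i < n" for i
  proof -
    have "dist (z k i) (z (Suc k) i) \<le> K * dmax n x0 (N x0) * r ^ k" for k
      using order_trans[OF dist_le_dmax[OF i] contr[OF x0 maps[OF x0], of k]]
      by (simp add: z_def funpow_swap1 mult_ac)
    then have "Cauchy (\<lambda>k. z k i)"
      by (rule Cauchy_if_dist_Suc_le_geometric[OF r])
    moreover have "z k i \<in> X i" for k
    proof -
      have "z k \<in> prod_space n X" unfolding z_def by (rule funpow_closed[OF maps x0])
      then show ?thesis using i unfolding prod_space_def by auto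
    qed
    ultimately show ?thesis
      using X_complete[OF i, unfolded complete_def, rule_format, of "\<lambda>k. z k i"] by blast
  qed
  then obtain w where w: "\<And>i. i < n \<Longrightarrow> w i \<in> X i \<and> (\<lambda>k. z k i) \<longlonglongrightarrow> w i"
    by metis
  show ?thesis
  proof (rule that[of "restrict w {..<n}"])
    show "restrict w {..<n} \<in> prod_space n X" using w unfolding prod_space_def by auto
    show "(\<lambda>k. dmax n ((N ^^ k) x0) (restrict w {..<n})) \<longlonglongrightarrow> 0"
      unfolding tendsto_dmax_zero_iff using w by (simp add: z_def)
  qed
qed

lemma has_gafp_if_dmax_funpow_le:
  assumes X_nonempty: "\<And>i. i < n \<Longrightarrow> X i \<noteq> {}"
    and X_complete: "\<And>i. i < n \<Longrightarrow> complete (X i)"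
    and maps: "\<And>x. x \<in> prod_space n X \<Longrightarrow> N x \<in> prod_space n X"
    and r: "0 \<le> r" "r < 1"
    and contr: "\<And>x y k. x \<in> prod_space n X \<Longrightarrow> y \<in> prod_space n X \<Longrightarrow>
      dmax n ((N ^^ k) x) ((N ^^ k) y) \<le> K * r ^ k * dmax n x y"
  shows "has_gafp n X N"
proof -
  let ?S = "prod_space n X"
  have "?S \<noteq> {}"
    using X_nonempty unfolding prod_space_def PiE_eq_empty_iff by blast
  then obtain x0 where x0: "x0 \<in> ?S" by blast
  define z where "z k = (N ^^ k) x0" for k
  have z_in: "z k \<in> ?S" for k
    unfolding z_def by (rule funpow_closed[OF maps x0])
  obtain xt where xt_in: "xt \<in> ?S" and z_lim: "(\<lambda>k. dmax n (z k) xt) \<longlonglongrightarrow> 0"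
    using funpow_dmax_convergent[OF X_complete maps r contr x0] unfolding z_def by blast
  have "N xt = xt"
  proof (rule PiE_ext[OF maps[OF xt_in, unfolded prod_space_def] xt_in[unfolded prod_space_def]])
    have "(\<lambda>k. dmax n (z (Suc k)) (N xt)) \<longlonglongrightarrow> 0"
    proof (rule tendsto_sandwich[OF _ _ tendsto_const tendsto_mult_right_zero[OF z_lim, of "K * r"]])
      show "\<forall>\<^sub>F k in sequentially. dmax n (z (Suc k)) (N xt) \<le> K * r * dmax n (z k) xt"
        using contr[OF z_in xt_in, of 1] by (simp add: always_eventually z_def)
    qed (simp add: dmax_nonneg)
    moreover have "(\<lambda>k. dmax n (z (Suc k)) xt) \<longlonglongrightarrow> 0"
      using LIMSEQ_Suc[OF z_lim] .
    ultimately show "N xt i = xt i" if "i \<in> {..<n}" for i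
      using that unfolding tendsto_dmax_zero_iff by (metis LIMSEQ_unique lessThan_iff)
  qed
  then have fixed_iter: "(N ^^ k) xt = xt" for k
    by (induction k) simp_all
  have "(\<lambda>k. dmax n ((N ^^ k) y) xt) \<longlonglongrightarrow> 0" if y: "y \<in> ?S" for y
  proof (rule tendsto_sandwich[OF _ _ tendsto_const])
    show "(\<lambda>k. K * r ^ k * dmax n y xt) \<longlonglongrightarrow> 0"
      using LIMSEQ_power_zero[of r] r by (intro tendsto_eq_intros) auto
    show "\<forall>\<^sub>F k in sequentially. dmax n ((N ^^ k) y) xt \<le> K * r ^ k * dmax n y xt"
      using contr[OF y xt_in] fixed_iter by (simp add: always_eventually)
  qed (simp add: dmax_nonneg)
  then show ?thesis
    unfolding has_gafp_def globally_attracting_fixed_point_def using xt_in by blast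
qed

lemma lip_const_nonneg: "lip_finite S f \<Longrightarrow> 0 \<le> lip_const S f"
  unfolding lip_const_def lip_finite_def by (intro cSup_upper) auto

lemma dist_le_lip_const:
  assumes "lip_finite S f" "x \<in> S" "y \<in> S"
  shows "dist (f x) (f y) \<le> lip_const S f * dist x y"
proof (cases "x = y")
  case False
  have "dist (f x) (f y) / dist x y \<le> lip_const S f"
    unfolding lip_const_def using assms False
    by (intro cSup_upper) (auto simp: lip_finite_def)
  then show ?thesis using False by (simp add: divide_le_eq)
qed simp

lemma lip_const_le_max_lip: "i < n \<Longrightarrow> lip_const (X i) (T i) \<le> max_lip n X T"
  unfolding max_lip_def by (intro Max_ge) auto

lemma is_interactionD:
  assumes "is_interaction n X F Ij Lam" "j < n"
  shows "Ij j \<subseteq> {..<n}"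
    and "\<And>x. x \<in> prod_space n X \<Longrightarrow> F j x \<in> X j"
    and "\<And>x y. x \<in> prod_space n X \<Longrightarrow> y \<in> prod_space n X \<Longrightarrow>
      dist (F j x) (F j y) \<le> (\<Sum>i\<in>Ij j. Lam i j * dist (x i) (y i))"
    and "\<And>i. i < n \<Longrightarrow> 0 \<le> Lam i j"
    and "\<And>i. i < n \<Longrightarrow> i \<notin> Ij j \<Longrightarrow> Lam i j = 0"
  using assms unfolding is_interaction_def by blast+

lemma product_map_in_prod_space:
  "(\<And>i. i < n \<Longrightarrow> T i ` X i \<subseteq> X i) \<Longrightarrow> x \<in> prod_space n X \<Longrightarrow> product_map n T x \<in> prod_space n X"
  unfolding prod_space_def product_map_def by (auto simp: PiE_iff image_subset_iff extensional_def)

lemma interaction_map_in_prod_space: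
  assumes "is_interaction n X F Ij Lam" "x \<in> prod_space n X"
  shows "interaction_map n F x \<in> prod_space n X"
  using is_interactionD(2)[OF assms(1) _ assms(2)] unfolding interaction_map_def prod_space_def
  by (auto simp: extensional_def split: if_splits)

lemma dist_network_le:
  assumes F_int: "is_interaction n X F Ij Lam"
    and T_maps: "\<And>i. i < n \<Longrightarrow> T i ` X i \<subseteq> X i"
    and T_lip: "\<And>i. i < n \<Longrightarrow> lip_finite (X i) (T i)"
    and x: "x \<in> prod_space n X" and y: "y \<in> prod_space n X" and j: "j < n"
  shows "dist ((interaction_map n F \<circ> product_map n T) x j) ((interaction_map n F \<circ> product_map n T) y j)
    \<le> (\<Sum>i<n. (max_lip n X T * Lam i j) * dist (x i) (y i))"
proof -
  let ?P = "product_map n T"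
  note F = is_interactionD[OF F_int j]
  have "dist ((interaction_map n F \<circ> ?P) x j) ((interaction_map n F \<circ> ?P) y j)
      = dist (F j (?P x)) (F j (?P y))"
    using j by (simp add: interaction_map_def)
  also have "\<dots> \<le> (\<Sum>i\<in>Ij j. Lam i j * dist (?P x i) (?P y i))"
    using F(3) product_map_in_prod_space[of n T X, OF T_maps] x y by blast
  also have "\<dots> \<le> (\<Sum>i\<in>Ij j. Lam i j * (max_lip n X T * dist (x i) (y i)))"
  proof (rule sum_mono)
    fix i assume "i \<in> Ij j"
    then have i: "i < n" using F(1) by blast
    then have "x i \<in> X i" "y i \<in> X i" using x y by (auto simp: prod_space_def)
    then have "dist (?P x i) (?P y i) \<le> lip_const (X i) (T i) * dist (x i) (y i)"
      using dist_le_lip_const[OF T_lip[OF i]] i by (simp add: product_map_def)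
    also have "\<dots> \<le> max_lip n X T * dist (x i) (y i)"
      using lip_const_le_max_lip[OF i] by (intro mult_right_mono) auto
    finally show "Lam i j * dist (?P x i) (?P y i) \<le> Lam i j * (max_lip n X T * dist (x i) (y i))"
      using F(4)[OF i] by (intro mult_left_mono)
  qed
  also have "\<dots> = (\<Sum>i<n. Lam i j * (max_lip n X T * dist (x i) (y i)))"
    using F(1,5) by (intro sum.mono_neutral_left) auto
  finally show ?thesis by (simp add: mult_ac)
qed

theorem corollary1:
  fixes n :: nat
    and X :: "nat \<Rightarrow> 'a::metric_space set"
    and T :: "nat \<Rightarrow> 'a \<Rightarrow> 'a"
    and F :: "nat \<Rightarrow> (nat \<Rightarrow> 'a) \<Rightarrow> 'a"
    and Ij :: "nat \<Rightarrow> nat set"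
    and Lam :: "nat \<Rightarrow> nat \<Rightarrow> real"
  assumes n_pos: "n > 0"
    and X_nonempty: "\<And>i. i < n \<Longrightarrow> X i \<noteq> {}"
    and X_compact: "\<And>i. i < n \<Longrightarrow> compact (X i)"
    and T_maps: "\<And>i. i < n \<Longrightarrow> T i ` X i \<subseteq> X i"
    and T_lip: "\<And>i. i < n \<Longrightarrow> lip_finite (X i) (T i)"
    and F_int: "is_interaction n X F Ij Lam"
    and contr: "max_lip n X T * spectral_radius (Lam_mat n Lam) < 1"
  shows "has_gafp n X (interaction_map n F \<circ> product_map n T)
       \<and> (max_lip n X T \<ge> 1 \<longrightarrow> stabilizes n X T F)
       \<and> (max_lip n X T < 1 \<longrightarrow> maintains_stability n X T F)"
proof -
  define L where "L = max_lip n X T"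
  define N where "N = interaction_map n F \<circ> product_map n T"
  have "0 \<le> L"
    using lip_const_nonneg[OF T_lip[OF n_pos]] lip_const_le_max_lip[OF n_pos, of X T] by (simp add: L_def)
  have rho: "spectral_radius (Lam_mat n (\<lambda>i j. L * Lam i j)) < 1"
    using order_le_less_trans[OF spectral_radius_Lam_mat_scale_le[OF n_pos \<open>0 \<le> L\<close>] contr[folded L_def]] .
  have maps: "N x \<in> prod_space n X" if "x \<in> prod_space n X" for x
    using interaction_map_in_prod_space[OF F_int] product_map_in_prod_space[of n T X, OF T_maps that]
    by (simp add: N_def)
  have nonneg: "0 \<le> L * Lam i j" if "i < n" "j < n" for i j
    using is_interactionD(4)[OF F_int that(2) that(1)] \<open>0 \<le> L\<close> by simp
  obtain r K where r: "0 \<le> r" "r < 1"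
    and contracting: "\<And>x y k. x \<in> prod_space n X \<Longrightarrow> y \<in> prod_space n X \<Longrightarrow>
      dmax n ((N ^^ k) x) ((N ^^ k) y) \<le> K * r ^ k * dmax n x y"
    by (rule dmax_funpow_le_geometric[OF n_pos maps dist_network_le[OF F_int T_maps T_lip, folded L_def N_def]
      nonneg rho]) (use that in auto)
  have "has_gafp n X N"
    by (rule has_gafp_if_dmax_funpow_le[OF X_nonempty compact_imp_complete[OF X_compact] maps r contracting])
  then show ?thesis unfolding stabilizes_def maintains_stability_def N_def by auto
qed

end
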